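(* Let $p>q>1$ be relatively prime integers. Then the map $F_{p,q}:A_{pq}^{\mathbb{Z}}\to A_{pq}^{\mathbb{Z}}$ is measure preserving and strongly mixing with respect to $\mu$, i.e. $\mu(F_{p,q}^{-1}(S))=\mu(S)$ for every Borel set $S$, and $\lim_{t\to\infty}\mu(F_{p,q}^{-t}(U)\cap V)=\mu(U)\mu(V)$ for all Borel sets $U,V\subseteq A_{pq}^{\mathbb{Z}}$.
   Context: For an integer $n>1$, $A_n=\{0,1,\dots,n-1\}$. $A_{pq}^{\mathbb{Z}}$ carries the product topology, and $\mu$ is the uniform Bernoulli (product) probability measure on its Borel sets, i.e. $\mu(\{c \mid c(i)c(i+1)\cdots c(i+|w|-1)=w\})=(pq)^{-|w|}$ for every nonempty word $w$ over $A_{pq}$ and $i\in\mathbb{Z}$. Define $g_{p,q}:A_{pq}\times A_{pq}\to A_{pq}$ by writing $x=x_1q+x_0$, $y=y_1q+y_0$ with $x_0,y_0\in A_q$, $x_1,y_1\in A_p$ (uniquely), and setting $g_{p,q}(x,y)=x_0p+y_1$. Then $F_{p,q}(c)(i)=g_{p,q}\big(g_{p,q}(c(i-1),c(i)),\,g_{p,q}(c(i),c(i+1))\big)$ for $c\in A_{pq}^{\mathbb{Z}}$, $i\in\mathbb{Z}$. *)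

theory Defs
  imports "HOL-Probability.Probability"
begin

definition alphabet :: "nat \<Rightarrow> nat set" where
  "alphabet n = {0..<n}"

text \<open>Uniform Bernoulli measure on A_{pq}^Z: the infinite product of the uniform
  probability measure on A_{pq}, on the product sigma-algebra (= Borel sets of the
  product topology, since A_{pq} is finite discrete and the index set is countable).\<close>
definition bernoulli_mu :: "nat \<Rightarrow> nat \<Rightarrow> (int \<Rightarrow> nat) measure" where
  "bernoulli_mu p q = (\<Pi>\<^sub>M i\<in>(UNIV::int set). uniform_count_measure (alphabet (p * q)))"

definition g_pq :: "nat \<Rightarrow> nat \<Rightarrow> nat \<Rightarrow> nat \<Rightarrow> nat" where
  "g_pq p q x y = (x mod q) * p + y div q"

definition F_pq :: "nat \<Rightarrow> nat \<Rightarrow> (int \<Rightarrow> nat) \<Rightarrow> (int \<Rightarrow> nat)" where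
  "F_pq p q c = (\<lambda>i. g_pq p q (g_pq p q (c (i - 1)) (c i)) (g_pq p q (c i) (c (i + 1))))"

end

theory Submission
  imports Defs
begin

text \<open>Split every cell x < pq into a p-digit x div q and a q-digit x mod q. Read a window of k
  cells as the base-pq number N of its digits; then the local rule g_pq merges the q-digit of one
  cell with the p-digit of the next, so the window of length k of the image is obtained from the
  window of length k + 2 of the preimage as N div q^2 mod (pq)^k, and after t steps as
  N div q^(2t) mod (pq)^k for the window of length k + 2t.

  Cylinder sets are therefore mapped to cylinder sets whose counting measure is unchanged, which
  gives invariance. For mixing, the event that the middle window of length k lies in T fixes the
  digits N div (pq)^t mod (pq)^k, while the preimage of a cylinder over S is a condition on
  N div q^(2t); as q^(2t) is much smaller than (pq)^t the latter is equidistributed along the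
  remaining low digits, with relative error of order (q/p)^t. Finally, cylinder sets approximate
  every measurable set in measure, so mixing extends from cylinders to all Borel sets.\<close>

section \<open>Window codes\<close>

primrec window_code :: "nat \<Rightarrow> int \<Rightarrow> nat \<Rightarrow> (int \<Rightarrow> nat) \<Rightarrow> nat" where
  "window_code P a 0 c = 0"
| "window_code P a (Suc k) c = window_code P a k c * P + c (a + int k)"

lemma window_code_less:
  assumes "\<forall>i. c i < P"
  shows "window_code P a k c < P ^ k"
proof (induction k)
  case (Suc k)
  have "window_code P a k c * P + c (a + int k) < (window_code P a k c + 1) * P"
    using assms by simp
  also have "\<dots> \<le> P ^ k * P"
    using Suc by (intro mult_le_mono1) simp
  finally show ?case by (simp add: mult.commute)
qed simp

lemma window_code_eq_iff:
  assumes "\<forall>i. c i < P" "0 < P"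
  shows "window_code P a k c = v \<longleftrightarrow>
    v < P ^ k \<and> (\<forall>j<k. c (a + int j) = v div P ^ (k - 1 - j) mod P)"
proof (induction k arbitrary: v)
  case (Suc k)
  have "window_code P a (Suc k) c = v \<longleftrightarrow>
      window_code P a k c = v div P \<and> c (a + int k) = v mod P"
    using assms by auto
  also have "\<dots> \<longleftrightarrow> v div P < P ^ k
      \<and> (\<forall>j<k. c (a + int j) = v div (P * P ^ (k - 1 - j)) mod P) \<and> c (a + int k) = v mod P"
    using Suc by (simp add: div_mult2_eq)
  also have "\<dots> \<longleftrightarrow> v < P ^ Suc k \<and> (\<forall>j<Suc k. c (a + int j) = v div P ^ (Suc k - 1 - j) mod P)"
  proof -
    have "P * P ^ (k - 1 - j) = P ^ (Suc k - 1 - j)" if "j < k" for j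
      using that by (simp flip: power_Suc add: Suc_diff_Suc)
    then show ?thesis
      using assms(2) by (auto simp: less_Suc_eq div_less_iff_less_mult mult.commute)
  qed
  finally show ?case .
qed simp

lemma window_code_append:
  "window_code P a (m + n) c = window_code P a m c * P ^ n + window_code P (a + int m) n c"
  by (induction n) (simp_all add: algebra_simps)

lemma window_code_shift: "window_code P a k (\<lambda>i. c (i - s)) = window_code P (a - s) k c"
  by (induction k) (simp_all add: algebra_simps)

lemma window_code_subwindow:
  assumes "\<forall>i. c i < P"
  shows "window_code P a k c = window_code P (a - int s) (s + k + r) c div P ^ r mod P ^ k"
proof -
  have "window_code P (a - int s) (s + (k + r)) c =
      (window_code P (a - int s) s c * P ^ k + window_code P a k c) * P ^ r
      + window_code P (a + int k) r c"
    using window_code_append[of P "a - int s" s "k + r" c] window_code_append[of P a k r c]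
    by (simp add: algebra_simps power_add)
  moreover have "0 < P"
    using assms by (cases P) auto
  ultimately show ?thesis
    using window_code_less[OF assms] by (simp add: add.assoc)
qed

lemma window_code_digit:
  assumes "\<forall>i. c i < P" "j < k"
  shows "window_code P a k c div P ^ (k - 1 - j) mod P = c (a + int j)"
proof -
  have "0 < P"
    using assms(1) by (cases P) auto
  then show ?thesis
    using window_code_eq_iff[OF assms(1), of a k "window_code P a k c"] assms(2) by simp
qed

lemma mult_add_mod_mult:
  fixes x r P M :: nat
  shows "r < P \<Longrightarrow> (x * P + r) mod (P * M) = x mod M * P + r"
  by (subst mod_mult2_eq) simp

lemma mod_mult_div_mod:
  fixes x b m d :: nat
  assumes "0 < b" "d dvd m"
  shows "x mod (b * m) div b mod d = x div b mod d"
  using assms by (simp add: mod_mult2_eq mod_mod_cancel)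

section \<open>The half step\<close>

definition half_step :: "nat \<Rightarrow> nat \<Rightarrow> (int \<Rightarrow> nat) \<Rightarrow> (int \<Rightarrow> nat)" where
  "half_step p q c = (\<lambda>i. g_pq p q (c i) (c (i + 1)))"

lemma g_pq_less:
  assumes "y < p * q" "0 < q"
  shows "g_pq p q x y < p * q"
proof -
  have "(x mod q + 1) * p \<le> q * p"
    using assms(2) by (intro mult_le_mono1) (simp add: Suc_leI)
  moreover have "y div q < p"
    using assms by (simp add: div_less_iff_less_mult)
  ultimately show ?thesis
    unfolding g_pq_def by (simp add: algebra_simps)
qed

lemma half_step_pow_less:
  "\<forall>i. c i < p * q \<Longrightarrow> 0 < q \<Longrightarrow> (half_step p q ^^ j) c i < p * q"
  by (induction j arbitrary: i) (simp_all add: half_step_def g_pq_less)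

lemma window_code_half_step:
  assumes c: "\<forall>i. c i < p * q" and q: "0 < q"
  shows "window_code (p * q) a k (half_step p q c) = window_code (p * q) a (k + 1) c div q mod (p * q) ^ k"
proof (induction k)
  case (Suc k)
  define N where "N = window_code (p * q) a (k + 1) c"
  define d where "d = c (a + int (k + 1))"
  define r where "r = N mod q * p + d div q"
  have "c (a + int k) mod q = N mod q"
    by (simp add: N_def mult.assoc[symmetric])
  then have "window_code (p * q) a (Suc k) (half_step p q c) = N div q mod (p * q) ^ k * (p * q) + r"
    using Suc by (simp add: half_step_def g_pq_def N_def d_def r_def ac_simps)
  also have "\<dots> = (N div q * (p * q) + r) mod ((p * q) * (p * q) ^ k)"
  proof -
    have "r < p * q"
      using g_pq_less[of d p q "N mod q"] c q by (simp add: d_def r_def g_pq_def)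
    then show ?thesis
      by (simp add: mult_add_mod_mult)
  qed
  also have "N div q * (p * q) + r = (N * (p * q) + d) div q"
  proof -
    have "(N * (p * q) + d) div q = N * p + d div q"
      using q by (simp add: mult.assoc[symmetric])
    moreover have "N * p = N div q * (p * q) + N mod q * p"
      by (metis add_mult_distrib2 div_mod_decomp mult.commute mult.left_commute)
    ultimately show ?thesis
      by (simp add: r_def)
  qed
  finally show ?case
    by (simp add: N_def d_def mult.commute)
qed simp

lemma window_code_half_step_pow:
  assumes "\<forall>i. c i < p * q" "0 < q"
  shows "window_code (p * q) a k ((half_step p q ^^ j) c)
    = window_code (p * q) a (k + j) c div q ^ j mod (p * q) ^ k"
  using assms(1)
proof (induction j arbitrary: c k)
  case 0
  then show ?case
    by (simp add: window_code_less)
next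
  case (Suc j)
  have "\<forall>i. half_step p q c i < p * q"
    using Suc.prems assms(2) half_step_pow_less[of c p q 1] by simp
  then have "window_code (p * q) a k ((half_step p q ^^ Suc j) c)
      = window_code (p * q) a (k + j) (half_step p q c) div q ^ j mod (p * q) ^ k"
    by (simp add: Suc.IH funpow_Suc_right del: funpow.simps)
  also have "\<dots> = window_code (p * q) a (k + j + 1) c div q mod (q ^ j * ((p * q) ^ k * p ^ j)) div q ^ j
      mod (p * q) ^ k"
    using window_code_half_step[OF Suc.prems assms(2)]
    by (simp add: power_add power_mult_distrib ac_simps)
  also have "\<dots> = window_code (p * q) a (k + Suc j) c div q ^ Suc j mod (p * q) ^ k"
    using assms(2) by (simp add: mod_mult_div_mod div_mult2_eq)
  finally show ?case .
qed

lemma half_step_shift: "half_step p q (\<lambda>i. c (i - s)) = (\<lambda>i. half_step p q c (i - s))"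
  by (simp add: half_step_def algebra_simps)

lemma F_pq_pow_eq:
  "(F_pq p q ^^ t) c = (\<lambda>i. (half_step p q ^^ (2 * t)) c (i - int t))"
proof (induction t)
  case (Suc t)
  have "(F_pq p q ^^ Suc t) c = (\<lambda>i. half_step p q (half_step p q ((F_pq p q ^^ t) c)) (i - 1))"
    by (simp add: F_pq_def half_step_def add.commute)
  also have "\<dots> = (\<lambda>i. (half_step p q ^^ (2 * Suc t)) c (i - int (Suc t)))"
    unfolding Suc half_step_shift by (simp add: algebra_simps)
  finally show ?case .
qed simp

lemma window_code_F_pq_pow:
  assumes "\<forall>i. c i < p * q" "0 < q"
  shows "window_code (p * q) a k ((F_pq p q ^^ t) c)
    = window_code (p * q) (a - int t) (k + 2 * t) c div q ^ (2 * t) mod (p * q) ^ k"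
  by (simp add: F_pq_pow_eq window_code_shift window_code_half_step_pow[OF assms])

section \<open>Counting residues\<close>

lemma card_div_mod_sum:
  fixes M Y :: nat
  assumes "0 < M"
  shows "card {N. N < M * Y \<and> f (N div M) \<and> g N}
    = (\<Sum>y | y < Y \<and> f y. card {r. r < M \<and> g (y * M + r)})"
proof -
  let ?A = "{y. y < Y \<and> f y}" and ?B = "\<lambda>y. {r. r < M \<and> g (y * M + r)}"
  have "bij_betw (\<lambda>N. (N div M, N mod M)) {N. N < M * Y \<and> f (N div M) \<and> g N} (Sigma ?A ?B)"
  proof (rule bij_betw_byWitness[where f' = "\<lambda>(y, r). y * M + r"])
    show "(\<lambda>N. (N div M, N mod M)) ` {N. N < M * Y \<and> f (N div M) \<and> g N} \<subseteq> Sigma ?A ?B"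
      using assms by (auto simp: div_less_iff_less_mult mult.commute)
    have "y * M + r < M * Y" if "y < Y" "r < M" for y r
    proof -
      have "y * M + r < (y + 1) * M" "(y + 1) * M \<le> Y * M"
        using that by (simp, intro mult_le_mono1) simp
      then show ?thesis
        by (simp add: mult.commute)
    qed
    then show "(\<lambda>(y, r). y * M + r) ` Sigma ?A ?B \<subseteq> {N. N < M * Y \<and> f (N div M) \<and> g N}"
      by auto
  qed (use assms in auto)
  then show ?thesis
    by (simp add: bij_betw_same_card)
qed

lemma card_div_fiber:
  fixes M Y :: nat
  shows "0 < M \<Longrightarrow> card {N. N < M * Y \<and> f (N div M)} = M * card {y. y < Y \<and> f y}"
  using card_div_mod_sum[of M Y f "\<lambda>_. True"] by simp

lemma card_mod_fiber:
  fixes M Y :: nat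
  assumes "0 < M"
  shows "card {N. N < M * Y \<and> g (N mod M)} = Y * card {r. r < M \<and> g r}"
proof -
  have "{r. r < M \<and> g ((y * M + r) mod M)} = {r. r < M \<and> g r}" for y
    by auto
  then show ?thesis
    using card_div_mod_sum[OF assms, of Y "\<lambda>_. True" "\<lambda>N. g (N mod M)"] by simp
qed

lemma card_div_mod_mem:
  fixes M K L :: nat
  assumes "0 < M" "0 < K"
  shows "card {N. N < M * (K * L) \<and> N div M mod K \<in> S} = M * L * card (S \<inter> {..<K})"
proof -
  have "card {N. N < M * (K * L) \<and> N div M mod K \<in> S} = M * card {y. y < K * L \<and> y mod K \<in> S}"
    using card_div_fiber[OF assms(1), of "K * L" "\<lambda>y. y mod K \<in> S"] by simp
  also have "\<dots> = M * (L * card {r. r < K \<and> r \<in> S})"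
    using card_mod_fiber[OF assms(2), of L "\<lambda>r. r \<in> S"] by simp
  also have "{r. r < K \<and> r \<in> S} = S \<inter> {..<K}"
    by auto
  finally show ?thesis
    by simp
qed

lemma inj_on_add_mod: "inj_on (\<lambda>r. (b + r) mod D) {..<(D::nat)}"
proof (rule inj_onI)
  have le_imp_eq: "x = y" if "x \<le> y" "y < D" "(b + x) mod D = (b + y) mod D" for x y :: nat
  proof -
    have "D dvd (b + y) - (b + x)"
      using that mod_eq_dvd_iff_nat[of "b + x" "b + y" D] by simp
    then have "D dvd y - x"
      by simp
    moreover have "y - x < D"
      using that by simp
    ultimately show ?thesis
      using that dvd_imp_le[of D "y - x"] by fastforce
  qed
  fix r r' assume "r \<in> {..<D}" "r' \<in> {..<D}" "(b + r) mod D = (b + r') mod D"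
  then show "r = r'"
    using le_imp_eq[of r r'] le_imp_eq[of r' r] by (cases "r \<le> r'") auto
qed

lemma card_add_mod_mem_period:
  assumes "0 < D" "R \<subseteq> {..<(D::nat)}"
  shows "card {r. r < D \<and> (b + r) mod D \<in> R} = card R"
proof -
  let ?f = "\<lambda>r. (b + r) mod D"
  have "?f ` {..<D} = {..<D}"
  proof (rule card_subset_eq)
    show "?f ` {..<D} \<subseteq> {..<D}"
      using assms(1) by auto
    show "card (?f ` {..<D}) = card {..<D}"
      using inj_on_add_mod by (rule card_image)
  qed simp
  have "?f ` {r. r < D \<and> ?f r \<in> R} = R"
  proof
    show "R \<subseteq> ?f ` {r. r < D \<and> ?f r \<in> R}"
    proof
      fix x assume "x \<in> R"
      then have "x \<in> ?f ` {..<D}"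
        using \<open>?f ` {..<D} = {..<D}\<close> assms(2) by auto
      then obtain r where "r < D" "x = ?f r"
        by auto
      then show "x \<in> ?f ` {r. r < D \<and> ?f r \<in> R}"
        using \<open>x \<in> R\<close> by auto
    qed
  qed auto
  moreover have "inj_on ?f {r. r < D \<and> ?f r \<in> R}"
    by (rule inj_on_subset[OF inj_on_add_mod]) auto
  ultimately show ?thesis
    using card_image by fastforce
qed

lemma card_add_mod_mem_le:
  assumes "l \<le> D" "R \<subseteq> {..<(D::nat)}"
  shows "card {r. r < l \<and> (b + r) mod D \<in> R} \<le> card R"
proof -
  have "inj_on (\<lambda>r. (b + r) mod D) {r. r < l \<and> (b + r) mod D \<in> R}"
    by (rule inj_on_subset[OF inj_on_add_mod]) (use assms in auto)
  then have "card {r. r < l \<and> (b + r) mod D \<in> R} = card ((\<lambda>r. (b + r) mod D) ` {r. r < l \<and> (b + r) mod D \<in> R})"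
    by (simp add: card_image)
  also have "\<dots> \<le> card R"
    using assms by (intro card_mono) (auto intro: finite_subset)
  finally show ?thesis .
qed

lemma card_less_split:
  assumes "D \<le> (l::nat)"
  shows "card {r. r < l \<and> P (b + r)} = card {r. r < D \<and> P (b + r)} + card {r. r < l - D \<and> P (b + D + r)}"
proof -
  let ?tail = "(\<lambda>r. D + r) ` {r. r < l - D \<and> P (b + D + r)}"
  have split: "{r. r < l \<and> P (b + r)} = {r. r < D \<and> P (b + r)} \<union> ?tail"
  proof (intro set_eqI iffI)
    fix x assume "x \<in> {r. r < l \<and> P (b + r)}"
    then show "x \<in> {r. r < D \<and> P (b + r)} \<union> ?tail"
      by (cases "x < D") (auto simp: add.assoc intro!: image_eqI[of x _ "x - D"])
  qed (use assms in \<open>auto simp: add.assoc\<close>)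
  have "card {r. r < l \<and> P (b + r)} = card {r. r < D \<and> P (b + r)} + card ?tail"
    unfolding split by (rule card_Un_disjoint) auto
  also have "card ?tail = card {r. r < l - D \<and> P (b + D + r)}"
    by (rule card_image) auto
  finally show ?thesis .
qed

lemma card_add_mod_mem_approx:
  assumes D: "0 < D" and R: "R \<subseteq> {..<(D::nat)}"
  shows "\<bar>real (card {r. r < l \<and> (b + r) mod D \<in> R}) - real l * card R / D\<bar> \<le> card R"
proof (induction l arbitrary: b rule: less_induct)
  case (less l)
  show ?case
  proof (cases "l < D")
    case True
    have "real l * card R \<le> real D * card R"
      using True by (intro mult_right_mono) auto
    then have "real l * card R / D \<le> card R"
      using D by (simp add: pos_divide_le_eq mult.commute)
    moreover have "real (card {r. r < l \<and> (b + r) mod D \<in> R}) \<le> card R"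
      using card_add_mod_mem_le[of l D R b] True R by simp
    moreover have "0 \<le> real l * card R / D"
      by simp
    ultimately show ?thesis
      by linarith
  next
    case False
    then have "card {r. r < l \<and> (b + r) mod D \<in> R} = card R + card {r. r < l - D \<and> (b + D + r) mod D \<in> R}"
      using card_less_split[of D l "\<lambda>x. x mod D \<in> R" b] card_add_mod_mem_period[OF D R, of b] by simp
    moreover have "real l * card R / D = card R + real (l - D) * card R / D"
      using False D by (simp add: of_nat_diff field_simps)
    ultimately show ?thesis
      using less.IH[of "l - D" "b + D"] False D by simp
  qed
qed

text \<open>Fixing the high digits N div M fixes the condition on N div M mod K; the condition on
  N div Q mod K depends only on N mod (Q * K), so along the M remaining low digits it is hit in the
  right proportion up to one period, which costs a relative error Q / M.\<close>

lemma card_two_windows_approx: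
  fixes M K Q :: nat
  assumes M: "0 < M" and K: "0 < K" and Q: "0 < Q" and S: "S \<subseteq> {..<K}" and T: "T \<subseteq> {..<K}"
  shows "\<bar>real (card {N. N < M * (K * M) \<and> N div Q mod K \<in> S \<and> N div M mod K \<in> T}) / (M * (K * M))
      - card S * card T / K\<^sup>2\<bar> \<le> card S * card T / K * (Q / M)"
proof -
  define R where "R = {x. x < Q * K \<and> x div Q \<in> S}"
  define Y where "Y = {y. y < K * M \<and> y mod K \<in> T}"
  define count where "count y = card {r. r < M \<and> (y * M + r) mod (Q * K) \<in> R}" for y
  have "{y. y < K \<and> y \<in> S} = S" "{y. y < K \<and> y \<in> T} = T"
    using S T by auto
  then have card_R: "card R = Q * card S" and card_Y: "card Y = M * card T"
    using card_div_fiber[OF Q, of K "\<lambda>y. y \<in> S"] card_mod_fiber[OF K, of M "\<lambda>r. r \<in> T"]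
    by (simp_all add: R_def Y_def)
  have "N div Q mod K \<in> S \<longleftrightarrow> N mod (Q * K) \<in> R" for N
  proof -
    have "N mod (Q * K) div Q = N div Q mod K"
      using Q by (simp add: mod_mult2_eq)
    then show ?thesis
      using Q K by (simp add: R_def)
  qed
  then have "card {N. N < M * (K * M) \<and> N div Q mod K \<in> S \<and> N div M mod K \<in> T} = (\<Sum>y\<in>Y. count y)"
    using card_div_mod_sum[OF M, of "K * M" "\<lambda>y. y mod K \<in> T" "\<lambda>N. N mod (Q * K) \<in> R"]
    by (simp add: Y_def count_def conj_commute)
  moreover have "\<bar>real (\<Sum>y\<in>Y. count y) - card Y * (M * card R / (Q * K))\<bar> \<le> card Y * card R"
  proof -
    have "\<bar>real (\<Sum>y\<in>Y. count y) - card Y * (M * card R / (Q * K))\<bar>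
        = \<bar>\<Sum>y\<in>Y. (real (count y) - M * card R / (Q * K))\<bar>"
      by (simp add: sum_subtractf)
    also have "\<dots> \<le> (\<Sum>y\<in>Y. \<bar>real (count y) - M * card R / (Q * K)\<bar>)"
      by (rule sum_abs)
    also have "\<dots> \<le> (\<Sum>y\<in>Y. real (card R))"
      using card_add_mod_mem_approx[of "Q * K" R M] Q K by (intro sum_mono) (auto simp: count_def R_def)
    finally show ?thesis
      by simp
  qed
  ultimately have "\<bar>real (card {N. N < M * (K * M) \<and> N div Q mod K \<in> S \<and> N div M mod K \<in> T})
      - M * M * card S * card T / K\<bar> \<le> M * card S * card T * Q"
    unfolding card_R card_Y using Q K by (simp add: field_simps)
  then have "\<bar>real (card {N. N < M * (K * M) \<and> N div Q mod K \<in> S \<and> N div M mod K \<in> T})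
      - M * M * card S * card T / K\<bar> / (M * K * M) \<le> M * card S * card T * Q / (M * K * M)"
    using M K by (intro divide_right_mono) auto
  then show ?thesis
    using M K by (simp add: field_simps power2_eq_square abs_div_pos flip: abs_divide)
qed

section \<open>Approximation and mixing in probability spaces\<close>

lemma (in finite_measure) abs_measure_diff_le_sym_diff:
  assumes "A \<in> sets M" "B \<in> sets M"
  shows "\<bar>measure M A - measure M B\<bar> \<le> measure M (sym_diff A B)"
proof -
  have "measure M X \<le> measure M Y + measure M (sym_diff A B)" if "X \<in> {A, B}" "Y \<in> {A, B}" for X Y
  proof -
    have "measure M X \<le> measure M (Y \<union> sym_diff A B)"
      using that assms by (intro finite_measure_mono) auto
    also have "\<dots> \<le> measure M Y + measure M (sym_diff A B)"
      using that assms by (intro measure_Un_le) auto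
    finally show ?thesis .
  qed
  then show ?thesis
    by (smt (verit) insertCI)
qed

lemma (in finite_measure) measure_UN_diff_lessThan_small:
  fixes a :: "nat \<Rightarrow> 'a set"
  assumes "range a \<subseteq> sets M" "0 < e"
  obtains n where "measure M ((\<Union>i. a i) - (\<Union>i<n. a i)) < e"
proof -
  have "incseq (\<lambda>n. \<Union>i<n. a i)"
    by (intro monoI UN_mono) auto
  then have "(\<lambda>n. measure M (\<Union>i<n. a i)) \<longlonglongrightarrow> measure M (\<Union>n. \<Union>i<n. a i)"
    using assms(1) by (intro finite_Lim_measure_incseq) auto
  moreover have "(\<Union>n. \<Union>i<n. a i) = (\<Union>i. a i)"
    by blast
  ultimately have "(\<lambda>n. measure M (\<Union>i<n. a i)) \<longlonglongrightarrow> measure M (\<Union>i. a i)"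
    by simp
  then obtain n where "\<bar>measure M (\<Union>i<n. a i) - measure M (\<Union>i. a i)\<bar> < e"
    using LIMSEQ_D[of _ "measure M (\<Union>i. a i)" e] assms(2) by fastforce
  moreover have "measure M ((\<Union>i. a i) - (\<Union>i<n. a i)) = measure M (\<Union>i. a i) - measure M (\<Union>i<n. a i)"
    using assms(1) by (intro finite_measure_Diff) auto
  ultimately have "measure M ((\<Union>i. a i) - (\<Union>i<n. a i)) < e"
    by linarith
  then show ?thesis
    by (rule that)
qed

lemma (in finite_measure) measure_sym_diff_UN_le:
  fixes a C :: "nat \<Rightarrow> 'a set"
  assumes "range a \<subseteq> sets M" "range C \<subseteq> sets M"
  shows "measure M (sym_diff (\<Union>i. a i) (\<Union>i<n. C i))
    \<le> measure M ((\<Union>i. a i) - (\<Union>i<n. a i)) + (\<Sum>i<n. measure M (sym_diff (a i) (C i)))"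
proof -
  have "measure M (sym_diff (\<Union>i. a i) (\<Union>i<n. C i))
      \<le> measure M (((\<Union>i. a i) - (\<Union>i<n. a i)) \<union> (\<Union>i<n. sym_diff (a i) (C i)))"
    using assms by (intro finite_measure_mono) auto
  also have "\<dots> \<le> measure M ((\<Union>i. a i) - (\<Union>i<n. a i)) + measure M (\<Union>i<n. sym_diff (a i) (C i))"
    using assms by (intro measure_Un_le) auto
  also have "measure M (\<Union>i<n. sym_diff (a i) (C i)) \<le> (\<Sum>i<n. measure M (sym_diff (a i) (C i)))"
    using assms by (intro finite_measure_subadditive_finite) auto
  finally show ?thesis
    by simp
qed

lemma (in finite_measure) UN_approx:
  fixes a :: "nat \<Rightarrow> 'a set"
  assumes a: "range a \<subseteq> sets M" and A: "A \<subseteq> sets M" "{} \<in> A"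
    and union: "\<And>X Y. X \<in> A \<Longrightarrow> Y \<in> A \<Longrightarrow> X \<union> Y \<in> A"
    and approx: "\<And>i e. 0 < e \<Longrightarrow> \<exists>C\<in>A. measure M (sym_diff (a i) C) < e"
    and e: "0 < e"
  shows "\<exists>C\<in>A. measure M (sym_diff (\<Union>i. a i) C) < e"
proof -
  obtain n where n: "measure M ((\<Union>i. a i) - (\<Union>i<n. a i)) < e / 2"
    using measure_UN_diff_lessThan_small[OF a, of "e / 2"] e by auto
  have "\<forall>i. \<exists>C. C \<in> A \<and> measure M (sym_diff (a i) C) < e / (2 * (n + 1))"
    using approx e by (simp add: Bex_def)
  then obtain C where C: "\<And>i. C i \<in> A" "\<And>i. measure M (sym_diff (a i) (C i)) < e / (2 * (n + 1))"
    by metis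
  have "(\<Sum>i<n. measure M (sym_diff (a i) (C i))) \<le> n * (e / (2 * (n + 1)))"
    using sum_mono[of "{..<n}" "\<lambda>i. measure M (sym_diff (a i) (C i))" "\<lambda>_. e / (2 * (n + 1))"] C(2)
    by (simp add: less_imp_le)
  also have "\<dots> \<le> e / 2"
    using e by (simp add: field_simps)
  finally have "measure M (sym_diff (\<Union>i. a i) (\<Union>i<n. C i)) < e"
    using measure_sym_diff_UN_le[OF a, of C n] C(1) A(1) n by fastforce
  moreover have "(\<Union>i\<in>I. C i) \<in> A" if "finite I" for I
    using that by (induction I rule: finite_induct) (auto intro: union A(2) C(1))
  ultimately show ?thesis
    by blast
qed

lemma (in finite_measure) sigma_sets_approx:
  assumes sets_eq: "sets M = sigma_sets (space M) G"
    and G: "G \<subseteq> A" and A: "A \<subseteq> sets M" "{} \<in> A"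
    and compl: "\<And>X. X \<in> A \<Longrightarrow> space M - X \<in> A"
    and union: "\<And>X Y. X \<in> A \<Longrightarrow> Y \<in> A \<Longrightarrow> X \<union> Y \<in> A"
    and X: "X \<in> sets M" and e: "0 < e"
  shows "\<exists>C\<in>A. measure M (sym_diff X C) < e"
proof -
  have "X \<in> sigma_sets (space M) G"
    using X sets_eq by simp
  then have "\<forall>e>0. \<exists>C\<in>A. measure M (sym_diff X C) < e"
  proof (induction rule: sigma_sets.induct)
    case (Basic a)
    then show ?case
      using G by force
  next
    case Empty
    then show ?case
      using A(2) by force
  next
    case (Compl a)
    show ?case
    proof (intro allI impI)
      fix e :: real assume "0 < e"
      then obtain C where "C \<in> A" "measure M (sym_diff a C) < e"
        using Compl.IH by blast
      moreover have "a \<in> sets M" "C \<in> sets M"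
        using Compl.hyps sets_eq \<open>C \<in> A\<close> A(1) by auto
      then have "sym_diff (space M - a) (space M - C) = sym_diff a C"
        using sets.sets_into_space by blast
      ultimately show "\<exists>C'\<in>A. measure M (sym_diff (space M - a) C') < e"
        using compl by metis
    qed
  next
    case (Union a)
    have "range a \<subseteq> sets M"
      using Union.hyps sets_eq by auto
    then show ?case
      using UN_approx A union Union.IH by blast
  qed
  then show ?thesis
    using e by blast
qed

lemma (in prob_space) abs_prob_mult_diff_le:
  assumes "U \<in> sets M" "U' \<in> sets M" "V \<in> sets M" "V' \<in> sets M"
  shows "\<bar>prob U * prob V - prob U' * prob V'\<bar> \<le> prob (sym_diff U U') + prob (sym_diff V V')"
proof -
  have "prob U * prob V - prob U' * prob V' = (prob U - prob U') * prob V + prob U' * (prob V - prob V')"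
    by (simp add: algebra_simps)
  moreover have "\<bar>(prob U - prob U') * prob V\<bar> \<le> \<bar>prob U - prob U'\<bar>"
    unfolding abs_mult by (rule mult_left_le) auto
  moreover have "\<bar>prob U' * (prob V - prob V')\<bar> \<le> \<bar>prob V - prob V'\<bar>"
    unfolding abs_mult by (rule mult_left_le_one_le) auto
  ultimately show ?thesis
    using abs_measure_diff_le_sym_diff[of U U'] abs_measure_diff_le_sym_diff[of V V'] assms
    by linarith
qed

lemma (in finite_measure) abs_measure_vimage_Int_diff_le:
  assumes f: "f \<in> measurable M M" and pres: "\<And>S. S \<in> sets M \<Longrightarrow> measure M (f -` S \<inter> space M) = measure M S"
    and sets: "U \<in> sets M" "U' \<in> sets M" "V \<in> sets M" "V' \<in> sets M"
  shows "\<bar>measure M (f -` U \<inter> space M \<inter> V) - measure M (f -` U' \<inter> space M \<inter> V')\<bar>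
    \<le> measure M (sym_diff U U') + measure M (sym_diff V V')"
proof -
  have pre_sets: "f -` X \<inter> space M \<in> sets M" if "X \<in> sets M" for X
    using f that by (rule measurable_sets)
  have sym_diff_sets: "sym_diff U U' \<in> sets M" "sym_diff V V' \<in> sets M"
    using sets by auto
  have "\<bar>measure M (f -` U \<inter> space M \<inter> V) - measure M (f -` U' \<inter> space M \<inter> V')\<bar>
      \<le> measure M (sym_diff (f -` U \<inter> space M \<inter> V) (f -` U' \<inter> space M \<inter> V'))"
    using sets.Int[OF pre_sets[OF sets(1)] sets(3)] sets.Int[OF pre_sets[OF sets(2)] sets(4)]
    by (rule abs_measure_diff_le_sym_diff)
  also have "\<dots> \<le> measure M ((f -` sym_diff U U' \<inter> space M) \<union> sym_diff V V')"
    using sets.Un[OF pre_sets[OF sym_diff_sets(1)] sym_diff_sets(2)]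
    by (intro finite_measure_mono) auto
  also have "\<dots> \<le> measure M (f -` sym_diff U U' \<inter> space M) + measure M (sym_diff V V')"
    using pre_sets[OF sym_diff_sets(1)] sym_diff_sets(2) by (rule measure_Un_le)
  finally show ?thesis
    using pres[OF sym_diff_sets(1)] by simp
qed

lemma (in prob_space) mixing_from_approximating_class:
  fixes f :: "nat \<Rightarrow> 'a \<Rightarrow> 'a"
  assumes meas: "\<And>t. f t \<in> measurable M M"
    and pres: "\<And>t S. S \<in> sets M \<Longrightarrow> measure M (f t -` S \<inter> space M) = measure M S"
    and A: "A \<subseteq> sets M"
    and approx: "\<And>X e. X \<in> sets M \<Longrightarrow> 0 < e \<Longrightarrow> \<exists>C\<in>A. measure M (sym_diff X C) < e"
    and mix: "\<And>U V. U \<in> A \<Longrightarrow> V \<in> A \<Longrightarrow>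
      (\<lambda>t. measure M (f t -` U \<inter> space M \<inter> V)) \<longlonglongrightarrow> measure M U * measure M V"
    and U: "U \<in> sets M" and V: "V \<in> sets M"
  shows "(\<lambda>t. measure M (f t -` U \<inter> space M \<inter> V)) \<longlonglongrightarrow> measure M U * measure M V"
proof (rule LIMSEQ_I)
  fix r :: real assume r: "0 < r"
  obtain U' V' where U': "U' \<in> A" "measure M (sym_diff U U') < r / 8"
    and V': "V' \<in> A" "measure M (sym_diff V V') < r / 8"
    using approx[OF U] approx[OF V] r by (meson divide_pos_pos zero_less_numeral)
  have U'_sets: "U' \<in> sets M" and V'_sets: "V' \<in> sets M"
    using U'(1) V'(1) A by auto
  obtain N where N: "\<And>t. N \<le> t \<Longrightarrow>
      \<bar>measure M (f t -` U' \<inter> space M \<inter> V') - measure M U' * measure M V'\<bar> < r / 4"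
    using LIMSEQ_D[OF mix[OF U'(1) V'(1)], of "r / 4"] r by auto
  have "\<bar>measure M (f t -` U \<inter> space M \<inter> V) - measure M U * measure M V\<bar> < r" if "N \<le> t" for t
    using abs_measure_vimage_Int_diff_le[OF meas pres[of _ t] U U'_sets V V'_sets]
      abs_prob_mult_diff_le[OF U U'_sets V V'_sets] N[OF that] U'(2) V'(2)
    by arith
  then show "\<exists>N. \<forall>t\<ge>N. norm (measure M (f t -` U \<inter> space M \<inter> V) - measure M U * measure M V) < r"
    by auto
qed

section \<open>Cylinder sets of the Bernoulli measure\<close>

locale pq_automaton =
  fixes p q :: nat
  assumes q_pos: "0 < q" and q_less_p: "q < p"
begin

abbreviation "cell \<equiv> uniform_count_measure (alphabet (p * q))"
abbreviation "mu \<equiv> bernoulli_mu p q"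

lemma pq_pos: "0 < p * q"
  using q_pos q_less_p by auto

lemma prob_space_cell: "prob_space cell"
  using pq_pos by (intro prob_space_uniform_count_measure) (auto simp: alphabet_def)

lemma product_prob_space_cell: "product_prob_space (\<lambda>_::int. cell)"
  using prob_space_cell
  by (auto simp: product_prob_space_def product_sigma_finite_def product_prob_space_axioms_def
      intro: prob_space_imp_sigma_finite)

lemma prob_space_mu: "prob_space mu"
  unfolding bernoulli_mu_def using prob_space_cell by (rule prob_space_PiM)

lemma space_mu: "space mu = {c. \<forall>i. c i < p * q}"
  by (auto simp: bernoulli_mu_def space_PiM space_uniform_count_measure alphabet_def PiE_UNIV_domain)

lemma sets_cell: "sets cell = Pow {..<p * q}"
  by (simp add: sets_uniform_count_measure alphabet_def lessThan_atLeast0)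

definition cylinder :: "int \<Rightarrow> nat \<Rightarrow> nat set \<Rightarrow> (int \<Rightarrow> nat) set" where
  "cylinder a k S = {c \<in> space mu. window_code (p * q) a k c \<in> S}"

lemma cylinder_singleton_eq:
  assumes "v < (p * q) ^ k"
  shows "cylinder a k {v} = {c \<in> space mu. \<forall>i\<in>(\<lambda>j. a + int j) ` {..<k}.
    c i \<in> {v div (p * q) ^ (k - 1 - nat (i - a)) mod (p * q)}}"
  using assms window_code_eq_iff[of _ "p * q" a k v] pq_pos by (auto simp: cylinder_def space_mu)

lemma emeasure_cylinder_singleton:
  assumes "v < (p * q) ^ k"
  shows "emeasure mu (cylinder a k {v}) = ennreal (1 / (p * q) ^ k)"
proof -
  interpret product_prob_space "\<lambda>_::int. cell" UNIV
    by (rule product_prob_space_cell)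
  let ?J = "(\<lambda>j. a + int j) ` {..<k}"
  let ?X = "\<lambda>i. {v div (p * q) ^ (k - 1 - nat (i - a)) mod (p * q)}"
  have "emeasure mu (cylinder a k {v}) = (\<Prod>i\<in>?J. emeasure cell (?X i))"
    unfolding cylinder_singleton_eq[OF assms] bernoulli_mu_def
    using pq_pos by (intro emeasure_PiM_Collect) (auto simp: sets_cell)
  also have "\<dots> = (\<Prod>i\<in>?J. ennreal (1 / (p * q)))"
    using pq_pos by (intro prod.cong)
      (auto simp: emeasure_uniform_count_measure alphabet_def ennreal_of_nat_eq_real_of_nat divide_ennreal)
  also have "\<dots> = ennreal (1 / (p * q) ^ k)"
    by (simp add: card_image inj_on_def ennreal_power power_one_over)
  finally show ?thesis .
qed

lemma cylinder_eq_UN: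
  "cylinder a k S = (\<Union>v\<in>S \<inter> {..<(p * q) ^ k}. cylinder a k {v})"
  using window_code_less[of _ "p * q" a k] by (auto simp: cylinder_def space_mu)

lemma cylinder_Int_lessThan: "cylinder a k (S \<inter> {..<(p * q) ^ k}) = cylinder a k S"
  using window_code_less[of _ "p * q" a k] by (auto simp: cylinder_def space_mu)

lemma cylinder_Int: "cylinder a k S \<inter> cylinder a k T = cylinder a k (S \<inter> T)"
  by (auto simp: cylinder_def)

lemma sets_cylinder: "cylinder a k S \<in> sets mu"
proof -
  have "cylinder a k {v} \<in> sets mu" if "v < (p * q) ^ k" for v
    unfolding cylinder_singleton_eq[OF that] bernoulli_mu_def
    by (rule sets.sets_Collect_finite_All) (auto simp: sets_cell)
  then show ?thesis
    by (subst cylinder_eq_UN) (auto intro: sets.finite_UN)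
qed

lemma measure_cylinder:
  "measure mu (cylinder a k S) = card (S \<inter> {..<(p * q) ^ k}) / (p * q) ^ k"
proof -
  interpret prob_space mu
    by (rule prob_space_mu)
  have "measure mu (cylinder a k S) = (\<Sum>v\<in>S \<inter> {..<(p * q) ^ k}. measure mu (cylinder a k {v}))"
    by (subst cylinder_eq_UN, rule finite_measure_finite_Union)
      (auto simp: sets_cylinder disjoint_family_on_def, auto simp: cylinder_def)
  also have "\<dots> = (\<Sum>v\<in>S \<inter> {..<(p * q) ^ k}. 1 / (p * q) ^ k)"
    by (intro sum.cong) (auto simp: measure_def emeasure_cylinder_singleton)
  finally show ?thesis
    by simp
qed

lemma cylinder_subwindow:
  "cylinder a k S = cylinder (a - int s) (s + k + r) {N. N div (p * q) ^ r mod (p * q) ^ k \<in> S}"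
  using window_code_subwindow[of _ "p * q" a k s r] by (auto simp: cylinder_def space_mu)

lemma F_pq_pow_in_space: "c \<in> space mu \<Longrightarrow> (F_pq p q ^^ t) c \<in> space mu"
  using half_step_pow_less[of c p q "2 * t"] q_pos by (simp add: space_mu F_pq_pow_eq)

lemma vimage_F_pq_pow_cylinder:
  "(F_pq p q ^^ t) -` cylinder a k S \<inter> space mu
    = cylinder (a - int t) (k + 2 * t) {N. N div q ^ (2 * t) mod (p * q) ^ k \<in> S}"
  using window_code_F_pq_pow[of _ p q a k t] q_pos F_pq_pow_in_space
  by (auto simp: cylinder_def space_mu)

lemma measurable_F_pq_pow: "F_pq p q ^^ t \<in> measurable mu mu"
proof -
  have "(\<lambda>c. (F_pq p q ^^ t) c i) \<in> measurable mu cell" for i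
  proof (rule measurableI)
    show "(F_pq p q ^^ t) c i \<in> space cell" if "c \<in> space mu" for c
      using F_pq_pow_in_space[OF that] by (simp add: space_mu alphabet_def space_uniform_count_measure)
    fix A
    have "(F_pq p q ^^ t) c i = window_code (p * q) i 1 ((F_pq p q ^^ t) c)" for c
      by simp
    then have "(\<lambda>c. (F_pq p q ^^ t) c i) -` A \<inter> space mu = (F_pq p q ^^ t) -` cylinder i 1 A \<inter> space mu"
      using F_pq_pow_in_space by (auto simp: cylinder_def)
    then show "(\<lambda>c. (F_pq p q ^^ t) c i) -` A \<inter> space mu \<in> sets mu"
      by (simp add: vimage_F_pq_pow_cylinder sets_cylinder)
  qed
  then show ?thesis
    using F_pq_pow_in_space unfolding bernoulli_mu_def
    by (intro measurable_PiM_single') (auto simp: bernoulli_mu_def space_mu space_PiM PiE_def extensional_def)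
qed

lemma measure_vimage_F_pq_pow_cylinder:
  "measure mu ((F_pq p q ^^ t) -` cylinder a k S \<inter> space mu) = measure mu (cylinder a k S)"
proof -
  have pow_split: "(p * q) ^ (k + 2 * t) = q ^ (2 * t) * ((p * q) ^ k * p ^ (2 * t))"
    by (simp add: power_add power_mult_distrib ac_simps)
  have "{N. N div q ^ (2 * t) mod (p * q) ^ k \<in> S} \<inter> {..<(p * q) ^ (k + 2 * t)}
      = {N. N < q ^ (2 * t) * ((p * q) ^ k * p ^ (2 * t)) \<and> N div q ^ (2 * t) mod (p * q) ^ k \<in> S}"
    by (auto simp: pow_split)
  then have "card ({N. N div q ^ (2 * t) mod (p * q) ^ k \<in> S} \<inter> {..<(p * q) ^ (k + 2 * t)})
      = q ^ (2 * t) * p ^ (2 * t) * card (S \<inter> {..<(p * q) ^ k})"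
    using card_div_mod_mem[of "q ^ (2 * t)" "(p * q) ^ k" "p ^ (2 * t)" S] pq_pos q_pos by simp
  then have "measure mu ((F_pq p q ^^ t) -` cylinder a k S \<inter> space mu)
      = real (q ^ (2 * t) * p ^ (2 * t) * card (S \<inter> {..<(p * q) ^ k})) / (p * q) ^ (k + 2 * t)"
    unfolding vimage_F_pq_pow_cylinder measure_cylinder by simp
  also have "\<dots> = measure mu (cylinder a k S)"
    using pq_pos by (simp add: measure_cylinder power_add power_mult_distrib field_simps)
  finally show ?thesis .
qed

definition centered_cylinders :: "(int \<Rightarrow> nat) set set" where
  "centered_cylinders = {cylinder (- int n) (2 * n + 1) S | n S. True}"

lemma centered_cylinder_widen:
  assumes "n \<le> m"
  obtains S' where "cylinder (- int n) (2 * n + 1) S = cylinder (- int m) (2 * m + 1) S'"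
proof
  show "cylinder (- int n) (2 * n + 1) S = cylinder (- int m) (2 * m + 1)
      {N. N div (p * q) ^ (m - n) mod (p * q) ^ (2 * n + 1) \<in> S}"
    using cylinder_subwindow[of "- int n" "2 * n + 1" S "m - n" "m - n"] assms
    by (simp add: of_nat_diff mult_2)
qed

lemma centered_cylinders_common_window:
  assumes "U \<in> centered_cylinders" "V \<in> centered_cylinders"
  obtains n S T where "U = cylinder (- int n) (2 * n + 1) S" "V = cylinder (- int n) (2 * n + 1) T"
proof -
  obtain n m S T where U: "U = cylinder (- int n) (2 * n + 1) S" and V: "V = cylinder (- int m) (2 * m + 1) T"
    using assms by (auto simp: centered_cylinders_def)
  obtain S' where "U = cylinder (- int (max n m)) (2 * max n m + 1) S'"
    using centered_cylinder_widen[of n "max n m" S] U by auto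
  moreover obtain T' where "V = cylinder (- int (max n m)) (2 * max n m + 1) T'"
    using centered_cylinder_widen[of m "max n m" T] V by auto
  ultimately show ?thesis
    using that by blast
qed

lemma prod_emb_in_centered_cylinders:
  assumes "finite J"
  shows "prod_emb UNIV (\<lambda>_. cell) J (Pi\<^sub>E J X) \<in> centered_cylinders"
proof -
  define n where "n = Max (insert 0 ((\<lambda>j. nat \<bar>j\<bar>) ` J))"
  have n: "\<bar>j\<bar> \<le> int n" if "j \<in> J" for j
  proof -
    have "nat \<bar>j\<bar> \<le> n"
      unfolding n_def using assms that by (intro Max_ge) auto
    then show ?thesis
      by linarith
  qed
  define S where "S = {N. \<forall>j\<in>J. N div (p * q) ^ (2 * n - nat (j + int n)) mod (p * q) \<in> X j}"
  have "c j = window_code (p * q) (- int n) (2 * n + 1) c div (p * q) ^ (2 * n - nat (j + int n)) mod (p * q)"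
    if "c \<in> space mu" "j \<in> J" for c j
  proof -
    have index: "nat (j + int n) < 2 * n + 1" "- int n + int (nat (j + int n)) = j"
      "2 * n + 1 - 1 - nat (j + int n) = 2 * n - nat (j + int n)"
      using n[OF that(2)] by auto
    have "\<forall>i. c i < p * q"
      using that(1) by (simp add: space_mu)
    from window_code_digit[OF this index(1), of "- int n"] show ?thesis
      unfolding index(2,3) by simp
  qed
  then have "prod_emb UNIV (\<lambda>_. cell) J (Pi\<^sub>E J X) = cylinder (- int n) (2 * n + 1) S"
    by (auto simp: prod_emb_def cylinder_def S_def bernoulli_mu_def space_PiM)
  then show ?thesis
    by (auto simp: centered_cylinders_def)
qed

lemma sets_mu_eq: "sets mu = sigma_sets (space mu) (prod_algebra UNIV (\<lambda>_. cell))"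
  by (simp add: bernoulli_mu_def sets_PiM space_PiM)

lemma prod_algebra_subset_centered_cylinders: "prod_algebra UNIV (\<lambda>_. cell) \<subseteq> centered_cylinders"
  by (auto elim!: prod_algebraE simp: prod_emb_in_centered_cylinders)

lemma centered_cylinders_subset_sets: "centered_cylinders \<subseteq> sets mu"
  by (auto simp: centered_cylinders_def sets_cylinder)

lemma centered_cylinders_empty: "{} \<in> centered_cylinders"
  unfolding centered_cylinders_def cylinder_def by blast

lemma centered_cylinders_compl: "U \<in> centered_cylinders \<Longrightarrow> space mu - U \<in> centered_cylinders"
  by (auto simp: centered_cylinders_def cylinder_def intro!: exI[of _ "- _"])

lemma centered_cylinders_Un:
  assumes "U \<in> centered_cylinders" "V \<in> centered_cylinders"
  shows "U \<union> V \<in> centered_cylinders"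
proof -
  obtain n S T where "U = cylinder (- int n) (2 * n + 1) S" "V = cylinder (- int n) (2 * n + 1) T"
    using centered_cylinders_common_window[OF assms] by metis
  then have "U \<union> V = cylinder (- int n) (2 * n + 1) (S \<union> T)"
    by (auto simp: cylinder_def)
  then show ?thesis
    by (auto simp: centered_cylinders_def)
qed

lemma distr_F_pq_pow: "distr mu mu (F_pq p q ^^ t) = mu"
proof -
  interpret pp: product_prob_space "\<lambda>_::int. cell" UNIV
    by (rule product_prob_space_cell)
  interpret mu: prob_space mu
    by (rule prob_space_mu)
  have "distr mu mu (F_pq p q ^^ t) = Pi\<^sub>M UNIV (\<lambda>_. cell)"
  proof (rule pp.PiM_eq)
    fix J :: "int set" and X
    assume J: "finite J" "J \<subseteq> UNIV" and X: "\<And>j. j \<in> J \<Longrightarrow> X j \<in> sets cell"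
    obtain n S where cyl: "prod_emb UNIV (\<lambda>_. cell) J (Pi\<^sub>E J X) = cylinder (- int n) (2 * n + 1) S"
      using prod_emb_in_centered_cylinders[OF J(1), of X] by (auto simp: centered_cylinders_def)
    have "emeasure (distr mu mu (F_pq p q ^^ t)) (prod_emb UNIV (\<lambda>_. cell) J (Pi\<^sub>E J X))
        = emeasure mu (prod_emb UNIV (\<lambda>_. cell) J (Pi\<^sub>E J X))"
      unfolding cyl using measure_vimage_F_pq_pow_cylinder measurable_F_pq_pow sets_cylinder
      by (simp add: emeasure_distr mu.emeasure_eq_measure measurable_sets)
    also have "\<dots> = (\<Prod>j\<in>J. emeasure cell (X j))"
      using pp.emeasure_PiM_emb[OF J(2,1) X] by (simp add: bernoulli_mu_def)
    finally show "emeasure (distr mu mu (F_pq p q ^^ t)) (prod_emb UNIV (\<lambda>_. cell) J (Pi\<^sub>E J X))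
        = (\<Prod>j\<in>J. emeasure cell (X j))" .
  qed (simp add: bernoulli_mu_def)
  then show ?thesis
    by (simp add: bernoulli_mu_def)
qed

lemma emeasure_vimage_F_pq_pow:
  "S \<in> sets mu \<Longrightarrow> emeasure mu ((F_pq p q ^^ t) -` S \<inter> space mu) = emeasure mu S"
  by (metis distr_F_pq_pow emeasure_distr measurable_F_pq_pow)

lemma measure_vimage_cylinder_Int_cylinder:
  "measure mu ((F_pq p q ^^ t) -` cylinder a k S \<inter> space mu \<inter> cylinder a k T)
    = card {N. N < (p * q) ^ t * ((p * q) ^ k * (p * q) ^ t)
        \<and> N div q ^ (2 * t) mod (p * q) ^ k \<in> S \<and> N div (p * q) ^ t mod (p * q) ^ k \<in> T}
      / ((p * q) ^ t * ((p * q) ^ k * (p * q) ^ t))"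
proof -
  let ?R = "{N. N div q ^ (2 * t) mod (p * q) ^ k \<in> S \<and> N div (p * q) ^ t mod (p * q) ^ k \<in> T}"
  have window: "t + k + t = k + 2 * t"
    by simp
  have "(F_pq p q ^^ t) -` cylinder a k S \<inter> space mu \<inter> cylinder a k T = cylinder (a - int t) (k + 2 * t) ?R"
    unfolding vimage_F_pq_pow_cylinder cylinder_subwindow[of a k T t t] window cylinder_Int
    by (simp add: Collect_conj_eq)
  moreover have window_length: "(p * q) ^ (k + 2 * t) = (p * q) ^ t * ((p * q) ^ k * (p * q) ^ t)"
    by (simp add: power_add mult_2)
  moreover from window_length have "?R \<inter> {..<(p * q) ^ (k + 2 * t)}
      = {N. N < (p * q) ^ t * ((p * q) ^ k * (p * q) ^ t)
        \<and> N div q ^ (2 * t) mod (p * q) ^ k \<in> S \<and> N div (p * q) ^ t mod (p * q) ^ k \<in> T}"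
    by auto
  ultimately show ?thesis
    by (simp only: measure_cylinder)
qed

lemma cylinder_mixing:
  "(\<lambda>t. measure mu ((F_pq p q ^^ t) -` cylinder a k S \<inter> space mu \<inter> cylinder a k T))
    \<longlonglongrightarrow> measure mu (cylinder a k S) * measure mu (cylinder a k T)"
proof -
  define K where "K = (p * q) ^ k"
  define S' where "S' = S \<inter> {..<K}"
  define T' where "T' = T \<inter> {..<K}"
  define C where "C = real (card S') * card T' / K"
  define x where "x t = measure mu ((F_pq p q ^^ t) -` cylinder a k S' \<inter> space mu \<inter> cylinder a k T')" for t
  have K: "0 < K"
    using pq_pos by (simp add: K_def)
  have bound: "\<bar>x t - card S' * card T' / K\<^sup>2\<bar> \<le> C * (q / p) ^ t" for t
  proof -
    have "real (q ^ (2 * t)) / real ((p * q) ^ t) = (q / p) ^ t"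
      using q_pos by (simp add: power_mult power_mult_distrib power_divide power2_eq_square)
    then show ?thesis
      using card_two_windows_approx[of "(p * q) ^ t" K "q ^ (2 * t)" S' T'] K pq_pos q_pos
      by (simp add: x_def C_def S'_def T'_def K_def measure_vimage_cylinder_Int_cylinder)
  qed
  have "(\<lambda>t. (q / p) ^ t) \<longlonglongrightarrow> 0"
    by (rule LIMSEQ_realpow_zero) (use q_pos q_less_p in auto)
  then have "(\<lambda>t. C * (q / p) ^ t) \<longlonglongrightarrow> 0"
    by (rule tendsto_mult_right_zero)
  then have "(\<lambda>t. x t - card S' * card T' / K\<^sup>2) \<longlonglongrightarrow> 0"
    by (rule Lim_null_comparison[rotated]) (use bound in \<open>simp add: always_eventually\<close>)
  then have "x \<longlonglongrightarrow> card S' * card T' / K\<^sup>2"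
    by (simp add: LIM_zero_iff)
  moreover have "card S' * card T' / K\<^sup>2 = measure mu (cylinder a k S) * measure mu (cylinder a k T)"
    by (simp add: measure_cylinder S'_def T'_def K_def power2_eq_square)
  ultimately show ?thesis
    unfolding x_def S'_def T'_def K_def cylinder_Int_lessThan by simp
qed

lemma centered_cylinders_mixing:
  assumes "U \<in> centered_cylinders" "V \<in> centered_cylinders"
  shows "(\<lambda>t. measure mu ((F_pq p q ^^ t) -` U \<inter> space mu \<inter> V)) \<longlonglongrightarrow> measure mu U * measure mu V"
  using centered_cylinders_common_window[OF assms] by (metis cylinder_mixing)

lemma F_pq_mixing:
  assumes "U \<in> sets mu" "V \<in> sets mu"
  shows "(\<lambda>t. measure mu ((F_pq p q ^^ t) -` U \<inter> space mu \<inter> V)) \<longlonglongrightarrow> measure mu U * measure mu V"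
proof -
  interpret prob_space mu
    by (rule prob_space_mu)
  show ?thesis
  proof (rule mixing_from_approximating_class[OF measurable_F_pq_pow _ centered_cylinders_subset_sets])
    show "measure mu ((F_pq p q ^^ t) -` S \<inter> space mu) = measure mu S" if "S \<in> sets mu" for t S
      using emeasure_vimage_F_pq_pow[OF that] by (simp add: measure_def)
    show "\<exists>C\<in>centered_cylinders. measure mu (sym_diff X C) < e" if "X \<in> sets mu" "0 < e" for X e
      using sets_mu_eq prod_algebra_subset_centered_cylinders centered_cylinders_subset_sets
        centered_cylinders_empty centered_cylinders_compl centered_cylinders_Un that
      by (rule sigma_sets_approx)
  qed (use assms centered_cylinders_mixing in auto)
qed

end

theorem theorem3:
  fixes p q :: nat
  assumes "q > 1" and "p > q" and "coprime p q"
  shows "F_pq p q \<in> measurable (bernoulli_mu p q) (bernoulli_mu p q)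
    \<and> (\<forall>S \<in> sets (bernoulli_mu p q).
         emeasure (bernoulli_mu p q) (F_pq p q -` S \<inter> space (bernoulli_mu p q))
           = emeasure (bernoulli_mu p q) S)
    \<and> (\<forall>U \<in> sets (bernoulli_mu p q). \<forall>V \<in> sets (bernoulli_mu p q).
         (\<lambda>t::nat. measure (bernoulli_mu p q)
             (((F_pq p q) ^^ t) -` U \<inter> space (bernoulli_mu p q) \<inter> V))
         \<longlonglongrightarrow> measure (bernoulli_mu p q) U * measure (bernoulli_mu p q) V)"
proof -
  interpret pq_automaton p q
    using assms(1,2) by unfold_locales auto
  have "F_pq p q \<in> measurable mu mu"
    using measurable_F_pq_pow[of 1] by simp
  moreover have "emeasure mu (F_pq p q -` S \<inter> space mu) = emeasure mu S" if "S \<in> sets mu" for S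
    using emeasure_vimage_F_pq_pow[OF that, of 1] by simp
  ultimately show ?thesis
    using F_pq_mixing by blast
qed

end
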